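(* Let $\mathcal{P}_*$ be the nonempty powerset monad on $\mathbf{Sets}$, and let $\mathcal{K}\ell(\mathcal{P}_* )_{+1}$ be the category whose objects are sets and whose morphisms $X\to Y$ are functions $f\colon X\to\mathcal{P}_*(Y+1)$, with composition $(g\odot f)(x)=\bigcup_{y\in f(x)\cap Y} g(y)\,\cup\,\{*\mid *\in f(x)\}$ for $g\colon Y\to\mathcal{P}_*(Z+1)$. Define $\square\colon\mathcal{K}\ell(\mathcal{P}_* )_{+1}\to\mathbf{PoSets}^{\mathrm{op}}$ by $\square(X)=\mathcal{P}(X)$ (ordered by inclusion) and, for $f\colon X\to\mathcal{P}_*(Y+1)$ and $Q\subseteq Y$, $\square(f)(Q)=\{x\in X\mid \forall y\in Y.\ y\in f(x)\Rightarrow y\in Q\}$. Then the forgetful functor $U\colon\int\square\to\mathcal{K}\ell(\mathcal{P}_* )_{+1}$ has a left adjoint $0$ with $0(X)=(X,\emptyset)$ and a right adjoint $1$ with $1(X)=(X,X)$; moreover there is a functor (comprehension) $\int\square\to\mathcal{K}\ell(\mathcal{P}_* )_{+1}$ with $(X,P)\mapsto P$ which is right adjoint to $1$, and a functor (quotient) with $(X,P)\mapsto\neg P=X\setminus P$ which is left adjoint to $0$.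
   Context: $Y+1=Y\sqcup\{*\}$. For a functor $F\colon\mathcal{B}\to\mathbf{PoSets}^{\mathrm{op}}$, $\int F$ is the category with objects $(X,P)$, $P\in F(X)$, and morphisms $f\colon(X,P)\to(Y,Q)$ the morphisms $f\colon X\to Y$ of $\mathcal{B}$ with $P\le F(f)(Q)$; the forgetful functor sends $(X,P)\mapsto X$, $f\mapsto f$; $0$ and $1$ act as identity on morphisms. *)

theory Defs
  imports Main
begin

record ('o, 'm) cat =
  Ob   :: "'o set"
  Hom  :: "'o \<Rightarrow> 'o \<Rightarrow> 'm set"
  Comp :: "'m \<Rightarrow> 'm \<Rightarrow> 'm"   (* Comp g f = g after f *)
  Ident :: "'o \<Rightarrow> 'm"

definition is_functor ::
  "('o, 'm) cat \<Rightarrow> ('p, 'n) cat \<Rightarrow> ('o \<Rightarrow> 'p) \<Rightarrow> ('o \<Rightarrow> 'o \<Rightarrow> 'm \<Rightarrow> 'n) \<Rightarrow> bool" where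
  "is_functor C D Fo Fm \<longleftrightarrow>
     (\<forall>c\<in>Ob C. Fo c \<in> Ob D) \<and>
     (\<forall>c\<in>Ob C. \<forall>c'\<in>Ob C. \<forall>f\<in>Hom C c c'. Fm c c' f \<in> Hom D (Fo c) (Fo c')) \<and>
     (\<forall>c\<in>Ob C. Fm c c (Ident C c) = Ident D (Fo c)) \<and>
     (\<forall>c\<in>Ob C. \<forall>c'\<in>Ob C. \<forall>c''\<in>Ob C. \<forall>f\<in>Hom C c c'. \<forall>g\<in>Hom C c' c''.
        Fm c c'' (Comp C g f) = Comp D (Fm c' c'' g) (Fm c c' f))"

definition is_left_adjoint ::
  "('o, 'm) cat \<Rightarrow> ('p, 'n) cat \<Rightarrow> ('o \<Rightarrow> 'p) \<Rightarrow> ('o \<Rightarrow> 'o \<Rightarrow> 'm \<Rightarrow> 'n)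
     \<Rightarrow> ('p \<Rightarrow> 'o) \<Rightarrow> ('p \<Rightarrow> 'p \<Rightarrow> 'n \<Rightarrow> 'm) \<Rightarrow> bool" where
  "is_left_adjoint C D Lo Lm Ro Rm \<longleftrightarrow>
     is_functor C D Lo Lm \<and> is_functor D C Ro Rm \<and>
     (\<exists>\<phi> :: 'o \<Rightarrow> 'p \<Rightarrow> 'n \<Rightarrow> 'm.
        (\<forall>c\<in>Ob C. \<forall>d\<in>Ob D. bij_betw (\<phi> c d) (Hom D (Lo c) d) (Hom C c (Ro d))) \<and>
        (\<forall>c\<in>Ob C. \<forall>c'\<in>Ob C. \<forall>d\<in>Ob D. \<forall>d'\<in>Ob D.
          \<forall>h\<in>Hom C c' c. \<forall>k\<in>Hom D d d'. \<forall>f\<in>Hom D (Lo c) d.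
            \<phi> c' d' (Comp D k (Comp D f (Lm c' c h)))
              = Comp C (Rm d d' k) (Comp C (\<phi> c d f) h)))"

text \<open>Objects are sets X :: 'a set (of an arbitrary universe type 'a); Y+1 is
  represented by 'a option with None = *. A morphism X \<rightarrow> Y is a function
  f : X \<rightarrow> P_*(Y+1), represented extensionally (f x = {} outside X).\<close>

definition KHom :: "'a set \<Rightarrow> 'a set \<Rightarrow> ('a \<Rightarrow> 'a option set) set" where
  "KHom X Y = {f. (\<forall>x\<in>X. f x \<noteq> {} \<and> f x \<subseteq> insert None (Some ` Y)) \<and> (\<forall>x. x \<notin> X \<longrightarrow> f x = {})}"

definition KComp :: "('a \<Rightarrow> 'a option set) \<Rightarrow> ('a \<Rightarrow> 'a option set) \<Rightarrow> ('a \<Rightarrow> 'a option set)" where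
  "KComp g f = (\<lambda>x. (\<Union>y\<in>{y. Some y \<in> f x}. g y) \<union> {z. z = None \<and> None \<in> f x})"

definition KId :: "'a set \<Rightarrow> ('a \<Rightarrow> 'a option set)" where
  "KId X = (\<lambda>x. if x \<in> X then {Some x} else {})"

definition KlP :: "('a set, 'a \<Rightarrow> 'a option set) cat" where
  "KlP = \<lparr>Ob = UNIV, Hom = KHom, Comp = KComp, Ident = KId\<rparr>"

definition box :: "'a set \<Rightarrow> 'a set \<Rightarrow> ('a \<Rightarrow> 'a option set) \<Rightarrow> 'a set \<Rightarrow> 'a set" where
  "box X Y f Q = {x\<in>X. \<forall>y\<in>Y. Some y \<in> f x \<longrightarrow> y \<in> Q}"

definition IntHom :: "'a set \<times> 'a set \<Rightarrow> 'a set \<times> 'a set \<Rightarrow> ('a \<Rightarrow> 'a option set) set" where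
  "IntHom XP YQ = {f \<in> KHom (fst XP) (fst YQ). snd XP \<subseteq> box (fst XP) (fst YQ) f (snd YQ)}"

definition IntBox :: "('a set \<times> 'a set, 'a \<Rightarrow> 'a option set) cat" where
  "IntBox = \<lparr>Ob = {(X, P). P \<subseteq> X}, Hom = IntHom, Comp = KComp, Ident = (\<lambda>XP. KId (fst XP))\<rparr>"

end

theory Submission
  imports Defs
begin

text \<open>
  The adjoints 0 and 1 of the forgetful functor and the comprehension functor are all identities
  on morphisms: the hom-sets of the Grothendieck construction out of \<open>(X, {})\<close> or into
  \<open>(Y, Y)\<close> are all of \<open>Hom(X, Y)\<close>, and those from \<open>(X, X)\<close> to \<open>(Y, Q)\<close> are \<open>Hom(X, Q)\<close>,
  so comprehension is restriction to the predicate.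

  For the quotient, a map \<open>(X, P) \<rightarrow> (Y, {})\<close> must send every point of \<open>P\<close> to \<open>*\<close>, so it is the
  same as a map \<open>X - P \<rightarrow> Y\<close>, namely its precomposition with the Kleisli map
  \<open>collapse X P : X \<rightarrow> (X - P) + 1\<close> that sends \<open>P\<close> to \<open>*\<close>. The quotient of \<open>f : (X, P) \<rightarrow> (Y, Q)\<close> is
  \<open>f\<close> followed by \<open>collapse Y Q\<close>, restricted to \<open>X - P\<close>; on \<open>P\<close> that composite is already \<open>*\<close>
  because \<open>f\<close> maps \<open>P\<close> into \<open>Q + 1\<close>. Hence transposing the quotient of \<open>f\<close> gives back \<open>f\<close>
  followed by \<open>collapse Y Q\<close>, and naturality of the transposition is associativity of Kleisli
  composition.
\<close>

lemma KlP_simps [simp]: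
  "Ob KlP = UNIV" "Hom KlP = KHom" "Comp KlP = KComp" "Ident KlP = KId"
  by (simp_all add: KlP_def)

lemma IntBox_simps [simp]:
  "Ob IntBox = {(X, P). P \<subseteq> X}" "Hom IntBox = IntHom" "Comp IntBox = KComp"
  "Ident IntBox = (\<lambda>XP. KId (fst XP))"
  by (simp_all add: IntBox_def)

lemma KComp_assoc: "KComp h (KComp g f) = KComp (KComp h g) f"
  by (rule ext) (auto simp: KComp_def)

lemma KComp_cong:
  "(\<And>y. Some y \<in> f x \<Longrightarrow> g y = g' y) \<Longrightarrow> KComp g f x = KComp g' f x"
  by (auto simp: KComp_def)

lemma KComp_eq_None:
  "f x \<noteq> {} \<Longrightarrow> (\<And>y. Some y \<in> f x \<Longrightarrow> g y = {None}) \<Longrightarrow> KComp g f x = {None}"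
  unfolding KComp_def by (auto, metis not_None_eq)

lemma KHom_KComp: "f \<in> KHom X Y \<Longrightarrow> g \<in> KHom Y Z \<Longrightarrow> KComp g f \<in> KHom X Z"
  unfolding KHom_def KComp_def by (auto; blast)

lemma subset_option_iff: "S \<subseteq> insert None (Some ` Y) \<longleftrightarrow> (\<forall>y. Some y \<in> S \<longrightarrow> y \<in> Y)"
proof
  show "S \<subseteq> insert None (Some ` Y)" if "\<forall>y. Some y \<in> S \<longrightarrow> y \<in> Y"
  proof
    fix z assume "z \<in> S"
    with that show "z \<in> insert None (Some ` Y)" by (cases z) auto
  qed
qed auto

lemma KHom_iff:
  "f \<in> KHom X Y \<longleftrightarrow>
     (\<forall>x\<in>X. f x \<noteq> {}) \<and> (\<forall>x y. Some y \<in> f x \<longrightarrow> y \<in> Y) \<and> (\<forall>x. x \<notin> X \<longrightarrow> f x = {})"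
  unfolding KHom_def subset_option_iff by blast

lemma KHom_outside: "f \<in> KHom X Y \<Longrightarrow> x \<notin> X \<Longrightarrow> f x = {}"
  by (simp add: KHom_def)

lemma KHom_SomeD: "f \<in> KHom X Y \<Longrightarrow> Some y \<in> f x \<Longrightarrow> x \<in> X \<and> y \<in> Y"
  unfolding KHom_def by (cases "x \<in> X") auto

lemma IntHom_iff:
  "P \<subseteq> X \<Longrightarrow>
   f \<in> IntHom (X, P) (Y, Q) \<longleftrightarrow> f \<in> KHom X Y \<and> (\<forall>x\<in>P. \<forall>y. Some y \<in> f x \<longrightarrow> y \<in> Q)"
  unfolding IntHom_def box_def by (auto dest: KHom_SomeD)

lemma IntHom_empty_pred: "IntHom (X, {}) (Y, Q) = KHom X Y"
  by (auto simp: IntHom_iff)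

lemma IntHom_full_pred: "P \<subseteq> X \<Longrightarrow> IntHom (X, P) (Y, Y) = KHom X Y"
  by (auto simp: IntHom_iff dest: KHom_SomeD)

lemma IntHom_full_dom:
  assumes "Q \<subseteq> Y"
  shows "IntHom (X, X) (Y, Q) = KHom X Q"
proof (intro set_eqI iffI)
  fix f assume "f \<in> IntHom (X, X) (Y, Q)"
  then show "f \<in> KHom X Q"
    unfolding IntHom_iff[OF order_refl] KHom_iff by (metis empty_iff)
next
  fix f assume "f \<in> KHom X Q"
  with assms show "f \<in> IntHom (X, X) (Y, Q)"
    unfolding IntHom_iff[OF order_refl] KHom_iff by blast
qed

lemma is_left_adjoint_by_equal_homs:
  assumes "is_functor C D Lo Lm" and "is_functor D C Ro Rm"
    and "\<And>c d. c \<in> Ob C \<Longrightarrow> d \<in> Ob D \<Longrightarrow> Hom D (Lo c) d = Hom C c (Ro d)"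
    and "\<And>c c' d d' h k f. \<lbrakk>c \<in> Ob C; c' \<in> Ob C; d \<in> Ob D; d' \<in> Ob D;
           h \<in> Hom C c' c; k \<in> Hom D d d'; f \<in> Hom D (Lo c) d\<rbrakk>
           \<Longrightarrow> Comp D k (Comp D f (Lm c' c h)) = Comp C (Rm d d' k) (Comp C f h)"
  shows "is_left_adjoint C D Lo Lm Ro Rm"
  unfolding is_left_adjoint_def using assms
  by (intro conjI exI[of _ "\<lambda>_ _ f. f"]) (auto simp: bij_betw_def)

lemma is_functor_forget: "is_functor IntBox KlP fst (\<lambda>_ _ f. f)"
  by (auto simp: is_functor_def IntHom_def)

lemma is_functor_empty_pred: "is_functor KlP IntBox (\<lambda>X. (X, {})) (\<lambda>_ _ f. f)"
  by (simp add: is_functor_def IntHom_empty_pred)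

lemma is_functor_full_pred: "is_functor KlP IntBox (\<lambda>X. (X, X)) (\<lambda>_ _ f. f)"
  by (simp add: is_functor_def IntHom_full_pred)

lemma empty_pred_left_adjoint_forget:
  "is_left_adjoint KlP IntBox (\<lambda>X. (X, {})) (\<lambda>_ _ f. f) fst (\<lambda>_ _ f. f)"
  by (rule is_left_adjoint_by_equal_homs)
    (auto simp: is_functor_empty_pred is_functor_forget IntHom_empty_pred)

lemma forget_left_adjoint_full_pred:
  "is_left_adjoint IntBox KlP fst (\<lambda>_ _ f. f) (\<lambda>X. (X, X)) (\<lambda>_ _ f. f)"
  by (rule is_left_adjoint_by_equal_homs)
    (auto simp: is_functor_forget is_functor_full_pred IntHom_full_pred)

definition kl_restrict :: "'a set \<Rightarrow> ('a \<Rightarrow> 'b set) \<Rightarrow> 'a \<Rightarrow> 'b set" where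
  "kl_restrict A f x = (if x \<in> A then f x else {})"

lemma KComp_kl_restrict: "KComp g (kl_restrict A f) = kl_restrict A (KComp g f)"
  by (rule ext) (simp add: kl_restrict_def KComp_def)

lemma KComp_kl_restrict_left:
  "(\<And>y. Some y \<in> f x \<Longrightarrow> y \<in> A) \<Longrightarrow> KComp (kl_restrict A g) f x = KComp g f x"
  by (rule KComp_cong) (simp add: kl_restrict_def)

lemma kl_restrict_KHom: "f \<in> KHom X Y \<Longrightarrow> A \<subseteq> X \<Longrightarrow> kl_restrict A f \<in> KHom A Y"
  by (auto simp: KHom_iff kl_restrict_def)

definition comprehension_mor ::
  "'a set \<times> 'a set \<Rightarrow> 'a set \<times> 'a set \<Rightarrow> ('a \<Rightarrow> 'a option set) \<Rightarrow> 'a \<Rightarrow> 'a option set" where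
  "comprehension_mor YQ ZR g = kl_restrict (snd YQ) g"

lemma is_functor_comprehension: "is_functor IntBox KlP snd comprehension_mor"
  unfolding is_functor_def
proof (intro conjI ballI; clarsimp)
  fix Y Q Z R g assume "Q \<subseteq> Y" "R \<subseteq> Z" "g \<in> IntHom (Y, Q) (Z, R)"
  then show "comprehension_mor (Y, Q) (Z, R) g \<in> KHom Q R"
    unfolding comprehension_mor_def kl_restrict_def IntHom_iff[OF \<open>Q \<subseteq> Y\<close>] KHom_iff
    by auto
next
  fix X P assume "P \<subseteq> X"
  then show "comprehension_mor (X, P) (X, P) (KId X) = KId P"
    by (auto simp: comprehension_mor_def kl_restrict_def KId_def fun_eq_iff)
next
  fix X P Y Q Z R f g
  assume "P \<subseteq> X" "Q \<subseteq> Y" "f \<in> IntHom (X, P) (Y, Q)" "g \<in> IntHom (Y, Q) (Z, R)"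
  then have "KComp g f x = KComp (kl_restrict Q g) f x" if "x \<in> P" for x
    using that by (intro KComp_kl_restrict_left[symmetric]) (auto simp: IntHom_iff)
  then show "comprehension_mor (X, P) (Z, R) (KComp g f)
      = KComp (comprehension_mor (Y, Q) (Z, R) g) (comprehension_mor (X, P) (Y, Q) f)"
    by (auto simp: comprehension_mor_def KComp_kl_restrict kl_restrict_def fun_eq_iff)
qed

lemma full_pred_left_adjoint_comprehension:
  "is_left_adjoint KlP IntBox (\<lambda>X. (X, X)) (\<lambda>_ _ f. f) snd comprehension_mor"
proof (rule is_left_adjoint_by_equal_homs)
  fix X X' YQ ZR h k f
  assume "YQ \<in> Ob IntBox" "h \<in> Hom KlP X' X" "f \<in> Hom IntBox (X, X) YQ"
  moreover obtain Y Q where "YQ = (Y, Q)" by fastforce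
  ultimately have "KComp f h \<in> KHom X' Q"
    by (auto simp: IntHom_full_dom intro: KHom_KComp)
  then show "Comp IntBox k (Comp IntBox f h) = Comp KlP (comprehension_mor YQ ZR k) (Comp KlP f h)"
    by (auto simp: comprehension_mor_def \<open>YQ = (Y, Q)\<close> KHom_iff KComp_kl_restrict_left)
qed (auto simp: is_functor_full_pred is_functor_comprehension IntHom_full_dom)

definition collapse :: "'a set \<Rightarrow> 'a set \<Rightarrow> 'a \<Rightarrow> 'a option set" where
  "collapse X P x = (if x \<in> P then {None} else if x \<in> X then {Some x} else {})"

lemma collapse_KHom: "P \<subseteq> X \<Longrightarrow> collapse X P \<in> KHom X (X - P)"
  by (auto simp: KHom_iff collapse_def)

lemma KComp_collapse:
  "KComp g (collapse X P) x = (if x \<in> P then {None} else if x \<in> X then g x else {})"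
  by (auto simp: KComp_def collapse_def)

lemma collapse_after_pred:
  assumes "Q \<subseteq> Y" and g: "g \<in> IntHom (Y, Q) (Z, R)" and "y \<in> Q"
  shows "KComp (collapse Z R) g y = {None}"
proof (rule KComp_eq_None)
  show "g y \<noteq> {}"
    using assms by (auto simp: IntHom_iff KHom_iff)
  show "collapse Z R w = {None}" if "Some w \<in> g y" for w
    using assms that by (auto simp: IntHom_iff collapse_def)
qed

definition quotient_mor ::
  "'a set \<times> 'a set \<Rightarrow> 'a set \<times> 'a set \<Rightarrow> ('a \<Rightarrow> 'a option set) \<Rightarrow> 'a \<Rightarrow> 'a option set" where
  "quotient_mor XP YQ f = kl_restrict (fst XP - snd XP) (KComp (collapse (fst YQ) (snd YQ)) f)"

lemma quotient_mor_KHom: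
  assumes "Q \<subseteq> Y" and "f \<in> IntHom (X, P) (Y, Q)"
  shows "quotient_mor (X, P) (Y, Q) f \<in> KHom (X - P) (Y - Q)"
  unfolding quotient_mor_def fst_conv snd_conv
  using assms by (intro kl_restrict_KHom KHom_KComp[OF _ collapse_KHom]) (auto simp: IntHom_def)

lemma quotient_mor_KId: "P \<subseteq> X \<Longrightarrow> quotient_mor (X, P) (X, P) (KId X) = KId (X - P)"
  by (auto simp: quotient_mor_def kl_restrict_def KComp_def KId_def collapse_def fun_eq_iff)

lemma quotient_mor_KComp:
  assumes "Q \<subseteq> Y" and f: "f \<in> IntHom (X, P) (Y, Q)" and g: "g \<in> IntHom (Y, Q) (Z, R)"
  shows "quotient_mor (X, P) (Z, R) (KComp g f)
    = KComp (quotient_mor (Y, Q) (Z, R) g) (quotient_mor (X, P) (Y, Q) f)"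
proof -
  let ?cQ = "collapse Y Q" and ?cR = "collapse Z R"
  have on_Y: "KComp (quotient_mor (Y, Q) (Z, R) g) ?cQ y = KComp ?cR g y" if "y \<in> Y" for y
    using that collapse_after_pred[OF assms(1) g]
    by (simp add: KComp_collapse quotient_mor_def kl_restrict_def)
  have "KComp (KComp (quotient_mor (Y, Q) (Z, R) g) ?cQ) f x = KComp (KComp ?cR g) f x" for x
  proof (rule KComp_cong)
    fix y assume "Some y \<in> f x"
    with f have "y \<in> Y" by (auto simp: IntHom_def dest: KHom_SomeD)
    then show "KComp (quotient_mor (Y, Q) (Z, R) g) ?cQ y = KComp ?cR g y" by (rule on_Y)
  qed
  then show ?thesis
    by (simp add: quotient_mor_def KComp_kl_restrict KComp_assoc fun_eq_iff kl_restrict_def)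
qed

lemma is_functor_quotient: "is_functor IntBox KlP (\<lambda>XP. fst XP - snd XP) quotient_mor"
  unfolding is_functor_def
  by (intro conjI ballI; clarsimp simp: quotient_mor_KHom quotient_mor_KId quotient_mor_KComp)

definition quotient_transpose ::
  "'a set \<times> 'a set \<Rightarrow> 'a set \<Rightarrow> ('a \<Rightarrow> 'a option set) \<Rightarrow> 'a \<Rightarrow> 'a option set" where
  "quotient_transpose XP Y f = KComp f (collapse (fst XP) (snd XP))"

lemma IntHom_empty_pred_on_pred:
  assumes "P \<subseteq> X" and "f \<in> IntHom (X, P) (Y, {})" and "x \<in> P"
  shows "f x = {None}"
proof -
  have "f x \<subseteq> insert None (Some ` {})"
    unfolding subset_option_iff using assms by (simp add: IntHom_iff)
  moreover have "f x \<noteq> {}"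
    using assms by (auto simp: IntHom_iff KHom_iff)
  ultimately show ?thesis by auto
qed

lemma bij_quotient_transpose:
  assumes "P \<subseteq> X"
  shows "bij_betw (quotient_transpose (X, P) Y) (KHom (X - P) Y) (IntHom (X, P) (Y, {}))"
proof (rule bij_betw_byWitness[where f' = "kl_restrict (X - P)"]; intro ballI subsetI)
  fix f assume "f \<in> KHom (X - P) Y"
  then show "kl_restrict (X - P) (quotient_transpose (X, P) Y f) = f"
    by (auto simp: quotient_transpose_def KComp_collapse kl_restrict_def fun_eq_iff KHom_outside)
next
  fix f assume f: "f \<in> IntHom (X, P) (Y, {})"
  then have "f \<in> KHom X Y" by (simp add: IntHom_def)
  with f assms show "quotient_transpose (X, P) Y (kl_restrict (X - P) f) = f"
    by (auto simp: quotient_transpose_def KComp_collapse kl_restrict_def fun_eq_iff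
        IntHom_empty_pred_on_pred KHom_outside)
next
  fix f' assume "f' \<in> quotient_transpose (X, P) Y ` KHom (X - P) Y"
  then obtain f where f: "f \<in> KHom (X - P) Y" and f': "f' = KComp f (collapse X P)"
    by (auto simp: quotient_transpose_def)
  have "f' \<in> KHom X Y"
    unfolding f' using f collapse_KHom[OF assms] by (rule KHom_KComp[rotated])
  moreover have "f' x = {None}" if "x \<in> P" for x
    using that by (simp add: f' KComp_collapse)
  ultimately show "f' \<in> IntHom (X, P) (Y, {})"
    using assms by (simp add: IntHom_iff)
next
  fix f' assume "f' \<in> kl_restrict (X - P) ` IntHom (X, P) (Y, {})"
  then show "f' \<in> KHom (X - P) Y"
    by (auto simp: IntHom_def intro: kl_restrict_KHom)
qed

lemma quotient_mor_after_collapse: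
  assumes "P' \<subseteq> X'" and h: "h \<in> IntHom (X', P') (X, P)"
  shows "KComp (quotient_mor (X', P') (X, P) h) (collapse X' P') = KComp (collapse X P) h"
proof
  fix x
  show "KComp (quotient_mor (X', P') (X, P) h) (collapse X' P') x = KComp (collapse X P) h x"
  proof (cases "x \<in> X'")
    case True
    then show ?thesis
      using collapse_after_pred[OF assms(1) h]
      by (simp add: KComp_collapse quotient_mor_def kl_restrict_def)
  next
    case False
    then have "h x = {}"
      using h by (auto simp: IntHom_def KHom_def)
    moreover have "x \<notin> P'"
      using False assms(1) by blast
    ultimately show ?thesis
      using False by (simp add: KComp_collapse) (simp add: KComp_def)
  qed
qed

lemma quotient_left_adjoint_empty_pred:
  "is_left_adjoint IntBox KlP (\<lambda>XP. fst XP - snd XP) quotient_mor (\<lambda>X. (X, {})) (\<lambda>_ _ f. f)"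
  unfolding is_left_adjoint_def
proof (intro conjI exI[of _ quotient_transpose] ballI)
  fix XP' XP :: "'a set \<times> 'a set" and Y Y' h k f
  assume "XP' \<in> Ob IntBox" "XP \<in> Ob IntBox" "h \<in> Hom IntBox XP' XP"
  then obtain X' P' X P where XP: "XP' = (X', P')" "XP = (X, P)" "P' \<subseteq> X'"
    and h: "h \<in> IntHom (X', P') (X, P)" by auto
  show "quotient_transpose XP' Y' (Comp KlP k (Comp KlP f (quotient_mor XP' XP h)))
      = Comp IntBox k (Comp IntBox (quotient_transpose XP Y f) h)"
    using quotient_mor_after_collapse[OF XP(3) h]
    by (simp add: XP quotient_transpose_def KComp_assoc[symmetric])
qed (auto simp: is_functor_quotient is_functor_empty_pred bij_quotient_transpose)

theorem proposition3p3:
  shows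
    "is_left_adjoint (KlP :: ('a set, 'a \<Rightarrow> 'a option set) cat) IntBox (\<lambda>X. (X, {})) (\<lambda>_ _ f. f) fst (\<lambda>_ _ f. f)
     \<and> is_left_adjoint (IntBox :: ('a set \<times> 'a set, 'a \<Rightarrow> 'a option set) cat) KlP fst (\<lambda>_ _ f. f) (\<lambda>X. (X, X)) (\<lambda>_ _ f. f)
     \<and> (\<exists>Cm. is_left_adjoint (KlP :: ('a set, 'a \<Rightarrow> 'a option set) cat) IntBox (\<lambda>X. (X, X)) (\<lambda>_ _ f. f) snd Cm)
     \<and> (\<exists>Qm. is_left_adjoint (IntBox :: ('a set \<times> 'a set, 'a \<Rightarrow> 'a option set) cat) KlP (\<lambda>XP. fst XP - snd XP) Qm (\<lambda>X. (X, {})) (\<lambda>_ _ f. f))"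
  using empty_pred_left_adjoint_forget forget_left_adjoint_full_pred
    full_pred_left_adjoint_comprehension quotient_left_adjoint_empty_pred
  by blast

end
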